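(* Let $G=(V,E)$ be a connected undirected graph and $u:V\to\mathbb{R}$. (i) If $u\ge0$ and $\Delta_\infty u\le 0$ on $V$, then $u$ is constant. (ii) If $u\le 0$ and $\Delta_\infty u\ge0$ on $V$, then $u$ is constant.
   Context: For $x,y\in V$ write $x\sim y$ if $\{x,y\}\in E$. The discrete infinity Laplacian is $\Delta_\infty u(x)=\inf_{y\sim x}u(y)+\sup_{y\sim x}u(y)-2u(x)$. The graph is not assumed locally finite. *)

theory Defs
  imports "HOL-Library.Extended_Real"
begin

definition graph :: "'a set \<Rightarrow> 'a set set \<Rightarrow> bool" where
  "graph V E \<longleftrightarrow> (\<forall>e\<in>E. \<exists>x y. x \<in> V \<and> y \<in> V \<and> x \<noteq> y \<and> e = {x, y})"

definition adj :: "'a set set \<Rightarrow> 'a \<Rightarrow> 'a \<Rightarrow> bool" where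
  "adj E x y \<longleftrightarrow> {x, y} \<in> E"

definition connected_graph :: "'a set \<Rightarrow> 'a set set \<Rightarrow> bool" where
  "connected_graph V E \<longleftrightarrow> graph V E \<and>
     (\<forall>x\<in>V. \<forall>y\<in>V. (x, y) \<in> {(a, b). adj E a b}\<^sup>*)"

text \<open>Discrete infinity Laplacian, valued in the extended reals since inf/sup over
  (possibly infinitely many) neighbours may be infinite.\<close>
definition inf_laplacian :: "'a set set \<Rightarrow> ('a \<Rightarrow> real) \<Rightarrow> 'a \<Rightarrow> ereal" where
  "inf_laplacian E u x =
     (INF y\<in>{y. adj E x y}. ereal (u y)) + (SUP y\<in>{y. adj E x y}. ereal (u y)) - ereal (2 * u x)"

end

theory Submission
  imports Defs
begin

text \<open>If \<open>\<Delta>\<^sub>\<infinity>u(y) \<le> 0\<close> and some neighbour of \<open>y\<close> lies more than \<open>c\<close> above \<open>u(y)\<close>,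
  then the supremum over the neighbours exceeds \<open>u(y) + c\<close>, so the infimum is below \<open>u(y) - c\<close>
  and some neighbour lies more than \<open>c\<close> below \<open>u(y)\<close>. Starting from an edge along which
  \<open>u\<close> drops by more than \<open>c > 0\<close>, this yields an infinite walk along which \<open>u\<close> decreases by
  more than \<open>c\<close> at every step, which is impossible for \<open>u \<ge> 0\<close>. Hence \<open>u\<close> cannot
  change along any edge, and is constant by connectedness. Part (ii) is the same argument for
  \<open>-u\<close>, with the roles of infimum and supremum exchanged.\<close>

lemma adj_sym: "adj E x y \<Longrightarrow> adj E y x"
  unfolding adj_def by (simp add: insert_commute)

lemma graph_adj_in_vertices: "graph V E \<Longrightarrow> adj E x y \<Longrightarrow> x \<in> V \<and> y \<in> V"
  unfolding adj_def graph_def by (metis doubleton_eq_iff)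

lemma inf_laplacian_nonpos_descent:
  assumes "inf_laplacian E u y \<le> 0" and "adj E y x" and "u y + c < u x"
  shows "\<exists>z. adj E y z \<and> u z < u y - c"
proof -
  define I where "I = (INF z\<in>{z. adj E y z}. ereal (u z))"
  define S where "S = (SUP z\<in>{z. adj E y z}. ereal (u z))"
  have "ereal (u x) \<le> S"
    unfolding S_def using assms(2) by (auto intro: SUP_upper)
  moreover have "I + S - ereal (2 * u y) \<le> 0"
    using assms(1) unfolding inf_laplacian_def I_def S_def .
  ultimately have "I < ereal (u y - c)"
    using assms(3) by (cases I; cases S) auto
  then show ?thesis
    unfolding I_def by (auto simp: INF_less_iff)
qed

text \<open>This does not follow from the previous lemma for \<open>-u\<close>: since \<open>\<infinity> + -\<infinity> = \<infinity>\<close> in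
  \<^typ>\<open>ereal\<close>, \<open>\<Delta>\<^sub>\<infinity>(-u) \<noteq> -\<Delta>\<^sub>\<infinity>u\<close> where the neighbour values are unbounded on both sides.\<close>

lemma inf_laplacian_nonneg_ascent:
  assumes "inf_laplacian E u y \<ge> 0" and "adj E y x" and "u x < u y - c"
  shows "\<exists>z. adj E y z \<and> u y + c < u z"
proof -
  define I where "I = (INF z\<in>{z. adj E y z}. ereal (u z))"
  define S where "S = (SUP z\<in>{z. adj E y z}. ereal (u z))"
  have "I \<le> ereal (u x)"
    unfolding I_def using assms(2) by (auto intro: INF_lower)
  moreover have "I + S - ereal (2 * u y) \<ge> 0"
    using assms(1) unfolding inf_laplacian_def I_def S_def .
  ultimately have "ereal (u y + c) < S"
    using assms(3) by (cases I; cases S) auto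
  then show ?thesis
    unfolding S_def by (auto simp: less_SUP_iff)
qed

lemma descent_walk:
  fixes f :: "'a \<Rightarrow> real"
  assumes "graph V E"
    and descent: "\<And>x y. y \<in> V \<Longrightarrow> adj E y x \<Longrightarrow> f y + c < f x \<Longrightarrow> \<exists>z. adj E y z \<and> f z < f y - c"
    and "adj E a b" and "f b + c < f a"
  shows "\<exists>x y. adj E x y \<and> f y + c < f x \<and> f y \<le> f b - real n * c"
proof (induction n)
  case 0
  show ?case using assms(3,4) by auto
next
  case (Suc n)
  then obtain x y where xy: "adj E x y" "f y + c < f x" "f y \<le> f b - real n * c"
    by blast
  have "y \<in> V"
    using graph_adj_in_vertices[OF assms(1) xy(1)] by simp
  then obtain z where "adj E y z" "f z < f y - c"
    using descent adj_sym[OF xy(1)] xy(2) by blast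
  moreover from this have "f z \<le> f b - real (Suc n) * c"
    using xy(3) by (simp add: algebra_simps)
  ultimately show ?case by force
qed

lemma descent_bounded_below_imp_monotone_on_edges:
  fixes f :: "'a \<Rightarrow> real"
  assumes "graph V E" and bounded: "\<forall>x\<in>V. m \<le> f x"
    and descent: "\<And>x y c. y \<in> V \<Longrightarrow> adj E y x \<Longrightarrow> f y + c < f x \<Longrightarrow> \<exists>z. adj E y z \<and> f z < f y - c"
    and "adj E a b"
  shows "f a \<le> f b"
proof (rule ccontr)
  assume "\<not> f a \<le> f b"
  define c where "c = (f a - f b) / 2"
  have "c > 0" and "f b + c < f a"
    using \<open>\<not> f a \<le> f b\<close> unfolding c_def by (simp_all add: field_simps)
  obtain n where n: "f b - m < real n * c"
    using reals_Archimedean3[OF \<open>c > 0\<close>] by blast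
  have "\<exists>x y. adj E x y \<and> f y + c < f x \<and> f y \<le> f b - real n * c"
    by (rule descent_walk[OF assms(1) _ assms(4) \<open>f b + c < f a\<close>]) (rule descent)
  then obtain x y where "adj E x y" "f y \<le> f b - real n * c"
    by blast
  moreover have "y \<in> V"
    using graph_adj_in_vertices[OF assms(1) \<open>adj E x y\<close>] by simp
  ultimately show False
    using bounded n by force
qed

lemma connected_graph_constant:
  assumes "connected_graph V E" and edge: "\<And>x y. adj E x y \<Longrightarrow> f x = f y"
  shows "\<exists>c. \<forall>x\<in>V. f x = c"
proof (cases "V = {}")
  case False
  then obtain x0 where "x0 \<in> V" by blast
  have "f a = f b" if "(a, b) \<in> {(a, b). adj E a b}\<^sup>*" for a b
    using that by (induction rule: rtrancl_induct) (auto dest: edge)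
  with assms(1) \<open>x0 \<in> V\<close> show ?thesis
    unfolding connected_graph_def by metis
qed simp

lemma descent_bounded_below_imp_constant:
  fixes f :: "'a \<Rightarrow> real"
  assumes "connected_graph V E" and bounded: "\<forall>x\<in>V. m \<le> f x"
    and descent: "\<And>x y c. y \<in> V \<Longrightarrow> adj E y x \<Longrightarrow> f y + c < f x \<Longrightarrow> \<exists>z. adj E y z \<and> f z < f y - c"
  shows "\<exists>c. \<forall>x\<in>V. f x = c"
proof (rule connected_graph_constant[OF assms(1)])
  have "graph V E"
    using assms(1) unfolding connected_graph_def by simp
  have monotone: "f a \<le> f b" if "adj E a b" for a b
    by (rule descent_bounded_below_imp_monotone_on_edges[OF \<open>graph V E\<close> bounded _ that])
      (rule descent)
  show "f x = f y" if "adj E x y" for x y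
    using monotone[OF that] monotone[OF adj_sym[OF that]] by simp
qed

theorem theorem3p7:
  fixes V :: "'a set" and E :: "'a set set" and u :: "'a \<Rightarrow> real"
  assumes "connected_graph V E"
  shows "((\<forall>x\<in>V. u x \<ge> 0) \<and> (\<forall>x\<in>V. inf_laplacian E u x \<le> 0) \<longrightarrow> (\<exists>c. \<forall>x\<in>V. u x = c))
       \<and> ((\<forall>x\<in>V. u x \<le> 0) \<and> (\<forall>x\<in>V. inf_laplacian E u x \<ge> 0) \<longrightarrow> (\<exists>c. \<forall>x\<in>V. u x = c))"
proof (intro conjI impI; elim conjE)
  assume nonneg: "\<forall>x\<in>V. u x \<ge> 0" and super: "\<forall>x\<in>V. inf_laplacian E u x \<le> 0"
  show "\<exists>c. \<forall>x\<in>V. u x = c"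
  proof (rule descent_bounded_below_imp_constant[OF assms])
    show "\<forall>x\<in>V. 0 \<le> u x"
      using nonneg by simp
    show "\<exists>z. adj E y z \<and> u z < u y - c" if "y \<in> V" "adj E y x" "u y + c < u x" for x y c
      using inf_laplacian_nonpos_descent[OF _ that(2,3)] super that(1) by simp
  qed
next
  assume nonpos: "\<forall>x\<in>V. u x \<le> 0" and sub: "\<forall>x\<in>V. inf_laplacian E u x \<ge> 0"
  have "\<exists>c. \<forall>x\<in>V. - u x = c"
  proof (rule descent_bounded_below_imp_constant[OF assms])
    show "\<forall>x\<in>V. 0 \<le> - u x"
      using nonpos by simp
    show "\<exists>z. adj E y z \<and> - u z < - u y - c" if "y \<in> V" "adj E y x" "- u y + c < - u x" for x y c
      using inf_laplacian_nonneg_ascent[of E u y x c] sub that by force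
  qed
  then show "\<exists>c. \<forall>x\<in>V. u x = c"
    by (metis minus_equation_iff)
qed

end
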